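(* Let $n,m,c$ be positive integers and $r,s,R,S$ nonnegative integers with $R\le n$, $S\le m$. Let $\alpha\in\mathrm{Par}(R,r)$, $\beta\in\mathrm{Par}(S,s)$, $\lambda\in\mathrm{Par}(n-R,c)$ and $\mu\in\mathrm{Par}(m-S,c)$. Then \[ X(q) = \frac{[(n-R)(m-S)]_q}{[c]_q} \begin{bmatrix}n\\ r\end{bmatrix}_q\begin{bmatrix}m\\ s\end{bmatrix}_q \begin{bmatrix}r\\ \alpha\end{bmatrix}_q \begin{bmatrix}s\\ \beta\end{bmatrix}_q \begin{bmatrix}c\\ \lambda\end{bmatrix}_q \begin{bmatrix}c\\ \mu\end{bmatrix}_q \] is a polynomial in $q$.
   Context: $\mathrm{Par}(N,k)$ is the set of integer partitions of $N$ with $k$ parts. Write $\lambda=(1^{m_1},2^{m_2},\dots)$ if $\lambda$ has $m_i$ parts equal to $i$. The $q$-notation is $[N]_q=(1-q^N)/(1-q)$, $[N]_q!=[1]_q\cdots[N]_q$, $\begin{bmatrix}N\\k\end{bmatrix}_q=\frac{[N]_q!}{[k]_q![N-k]_q!}$, and, for $\lambda$ with $k$ parts, $\begin{bmatrix}k\\ \lambda\end{bmatrix}_q=\frac{[k]_q!}{[m_1]_q![m_2]_q!\cdots}$. *)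

theory Defs
  imports Complex_Main "HOL-Library.Multiset" "HOL-Computational_Algebra.Polynomial"
begin

text \<open>Integer partitions of N with k parts, as multisets of positive integers.
  The multiplicity m_i of the part i is count lam i.\<close>
definition Par :: "nat \<Rightarrow> nat \<Rightarrow> nat multiset set" where
  "Par N k = {lam. size lam = k \<and> (\<forall>x\<in>#lam. 0 < x) \<and> sum_mset lam = N}"

definition qint :: "nat \<Rightarrow> complex \<Rightarrow> complex" where
  "qint N q = (1 - q ^ N) / (1 - q)"

definition qfact :: "nat \<Rightarrow> complex \<Rightarrow> complex" where
  "qfact N q = (\<Prod>i=1..N. qint i q)"

definition qbinom :: "nat \<Rightarrow> nat \<Rightarrow> complex \<Rightarrow> complex" where
  "qbinom N k q = qfact N q / (qfact k q * qfact (N - k) q)"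

definition qmultinom :: "nat \<Rightarrow> nat multiset \<Rightarrow> complex \<Rightarrow> complex" where
  "qmultinom k lam q = qfact k q / (\<Prod>i\<in>set_mset lam. qfact (count lam i) q)"

end

theory Submission
  imports Defs
begin

text \<open>Write \<open>m\<^sub>i\<close> for the multiplicity of the part \<open>i\<close> in \<open>\<lambda>\<close>. Clearing factorials gives
  \<open>[m\<^sub>i]\<^sub>q / [c]\<^sub>q \<cdot> [c; \<lambda>]\<^sub>q = [c - 1; \<lambda> - {i}]\<^sub>q\<close>, a q-multinomial coefficient and hence a
  polynomial. As \<open>|\<lambda>| = \<Sum>\<^sub>i i m\<^sub>i\<close>, and \<open>[a + b]\<^sub>q = [a]\<^sub>q + q\<^sup>a [b]\<^sub>q\<close> and
  \<open>[a b]\<^sub>q = [a]\<^sub>q \<cdot> [b] evaluated at q\<^sup>a\<close>, the product \<open>[|\<lambda>|]\<^sub>q / [c]\<^sub>q \<cdot> [c; \<lambda>]\<^sub>q\<close> is a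
  polynomial combination of these. The same product rule splits off \<open>[m - S]\<close> evaluated at
  \<open>q\<^sup>n\<^sup>-\<^sup>R\<close> from \<open>[(n - R)(m - S)]\<^sub>q\<close>; all remaining factors are q-binomial and q-multinomial
  coefficients, polynomials by the q-Pascal recurrence. Excluding roots of unity keeps every
  \<open>[k]\<^sub>q\<close> with \<open>k > 0\<close> nonzero.\<close>

lemma map_poly_of_int_add:
  "map_poly (of_int :: int \<Rightarrow> 'a::comm_ring_1) (p + q) = map_poly of_int p + map_poly of_int q"
  by (rule poly_eqI) (simp add: coeff_map_poly)

lemma map_poly_of_int_mult:
  "map_poly (of_int :: int \<Rightarrow> 'a::comm_ring_1) (p * q) = map_poly of_int p * map_poly of_int q"
  by (rule poly_eqI) (simp add: coeff_map_poly coeff_mult)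

definition int_polyfun_on :: "complex set \<Rightarrow> (complex \<Rightarrow> complex) \<Rightarrow> bool" where
  "int_polyfun_on S f \<longleftrightarrow> (\<exists>p :: int poly. \<forall>q\<in>S. f q = poly (map_poly of_int p) q)"

lemma int_polyfun_on_cong:
  "int_polyfun_on S f \<Longrightarrow> (\<And>q. q \<in> S \<Longrightarrow> f q = g q) \<Longrightarrow> int_polyfun_on S g"
  unfolding int_polyfun_on_def by metis

lemma int_polyfun_on_0: "int_polyfun_on S (\<lambda>q. 0)"
  unfolding int_polyfun_on_def by (intro exI[of _ 0]) simp

lemma int_polyfun_on_1: "int_polyfun_on S (\<lambda>q. 1)"
  unfolding int_polyfun_on_def by (intro exI[of _ 1]) simp

lemma int_polyfun_on_power: "int_polyfun_on S (\<lambda>q. q ^ j)"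
  unfolding int_polyfun_on_def
  by (intro exI[of _ "monom 1 j"]) (simp add: map_poly_monom poly_monom)

lemma int_polyfun_on_add:
  assumes "int_polyfun_on S f" "int_polyfun_on S g"
  shows "int_polyfun_on S (\<lambda>q. f q + g q)"
proof -
  obtain p p' :: "int poly" where "\<forall>q\<in>S. f q = poly (map_poly of_int p) q"
    and "\<forall>q\<in>S. g q = poly (map_poly of_int p') q"
    using assms unfolding int_polyfun_on_def by blast
  then show ?thesis
    unfolding int_polyfun_on_def by (intro exI[of _ "p + p'"]) (simp add: map_poly_of_int_add)
qed

lemma int_polyfun_on_mult:
  assumes "int_polyfun_on S f" "int_polyfun_on S g"
  shows "int_polyfun_on S (\<lambda>q. f q * g q)"
proof -
  obtain p p' :: "int poly" where "\<forall>q\<in>S. f q = poly (map_poly of_int p) q"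
    and "\<forall>q\<in>S. g q = poly (map_poly of_int p') q"
    using assms unfolding int_polyfun_on_def by blast
  then show ?thesis
    unfolding int_polyfun_on_def by (intro exI[of _ "p * p'"]) (simp add: map_poly_of_int_mult)
qed

lemma int_polyfun_on_sum:
  "(\<And>j. j \<in> A \<Longrightarrow> int_polyfun_on S (f j)) \<Longrightarrow> int_polyfun_on S (\<lambda>q. \<Sum>j\<in>A. f j q)"
  by (induction A rule: infinite_finite_induct) (auto intro: int_polyfun_on_0 int_polyfun_on_add)

lemma int_polyfun_on_prod:
  "(\<And>j. j \<in> A \<Longrightarrow> int_polyfun_on S (f j)) \<Longrightarrow> int_polyfun_on S (\<lambda>q. \<Prod>j\<in>A. f j q)"
  by (induction A rule: infinite_finite_induct) (auto intro: int_polyfun_on_1 int_polyfun_on_mult)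

definition non_roots_of_unity :: "complex set" where
  "non_roots_of_unity = {q. \<forall>k>0. q ^ k \<noteq> 1}"

lemma non_root_of_unity_power_ne_1:
  "q \<in> non_roots_of_unity \<Longrightarrow> 0 < k \<Longrightarrow> q ^ k \<noteq> 1"
  unfolding non_roots_of_unity_def by blast

lemma qint_eq_sum_power: "q \<noteq> 1 \<Longrightarrow> qint n q = (\<Sum>j<n. q ^ j)"
  by (simp add: qint_def sum_gp_strict)

text \<open>Both identities also hold at the junk points \<open>q = 1\<close> and \<open>q\<^sup>a = 1\<close>, where
  the division by zero makes both sides vanish.\<close>

lemma qint_add: "qint (a + b) q = qint a q + q ^ a * qint b q"
  by (cases "q = 1") (simp_all add: qint_def power_add field_simps)

lemma qint_mult: "qint (a * b) q = qint a q * qint b (q ^ a)"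
proof (cases "q = 1 \<or> q ^ a = 1")
  case True
  then show ?thesis by (auto simp: qint_def power_mult)
next
  case False
  then have "1 - q \<noteq> 0" "1 - q ^ a \<noteq> 0" by auto
  then show ?thesis by (simp add: qint_def power_mult)
qed

lemma qint_0 [simp]: "qint 0 q = 0"
  by (simp add: qint_def)

lemma qint_at_1 [simp]: "qint n 1 = 0"
  by (simp add: qint_def)

lemma qint_nonzero: "q \<in> non_roots_of_unity \<Longrightarrow> 0 < n \<Longrightarrow> qint n q \<noteq> 0"
  using non_root_of_unity_power_ne_1[of q] by (fastforce simp: qint_def)

lemma qfact_nonzero: "q \<in> non_roots_of_unity \<Longrightarrow> qfact n q \<noteq> 0"
  by (simp add: qfact_def qint_nonzero)

lemma qfact_0 [simp]: "qfact 0 q = 1"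
  by (simp add: qfact_def)

lemma qfact_Suc: "qfact (Suc n) q = qfact n q * qint (Suc n) q"
  by (simp add: qfact_def)

lemma int_polyfun_qint_power: "int_polyfun_on non_roots_of_unity (\<lambda>q. qint b (q ^ a))"
proof (cases "a = 0")
  case True
  then show ?thesis by (simp add: int_polyfun_on_0)
next
  case False
  show ?thesis
  proof (rule int_polyfun_on_cong)
    show "int_polyfun_on non_roots_of_unity (\<lambda>q. \<Sum>j<b. q ^ (a * j))"
      by (intro int_polyfun_on_sum int_polyfun_on_power)
    show "(\<Sum>j<b. q ^ (a * j)) = qint b (q ^ a)" if "q \<in> non_roots_of_unity" for q
      using non_root_of_unity_power_ne_1[OF that] False
      by (simp add: qint_eq_sum_power power_mult)
  qed
qed

lemma int_polyfun_qfact: "int_polyfun_on non_roots_of_unity (qfact n)"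
  using int_polyfun_on_prod[OF int_polyfun_qint_power[where a = 1]]
  by (simp add: qfact_def[abs_def])

lemma qbinom_pascal:
  assumes "q \<in> non_roots_of_unity"
  shows "qbinom (Suc a + Suc b) (Suc a) q
    = qbinom (a + Suc b) a q + q ^ Suc a * qbinom (Suc a + b) (Suc a) q"
proof -
  have nonzero: "qfact a q \<noteq> 0" "qfact b q \<noteq> 0" "qint (Suc a) q \<noteq> 0" "qint (Suc b) q \<noteq> 0"
    using assms by (simp_all add: qfact_nonzero qint_nonzero)
  have "qint (Suc (Suc (a + b))) q = qint (Suc a) q + q ^ Suc a * qint (Suc b) q"
    using qint_add[of "Suc a" "Suc b" q] by simp
  then show ?thesis
    using nonzero by (simp add: qbinom_def qfact_Suc field_simps)
qed

lemma int_polyfun_qbinom_add: "int_polyfun_on non_roots_of_unity (qbinom (a + b) a)"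
proof (induction a arbitrary: b)
  case 0
  show ?case
    by (rule int_polyfun_on_cong[OF int_polyfun_on_1]) (simp add: qbinom_def qfact_nonzero)
next
  case (Suc a)
  note IH_a = Suc.IH
  show ?case
  proof (induction b)
    case 0
    show ?case
      by (rule int_polyfun_on_cong[OF int_polyfun_on_1]) (simp add: qbinom_def qfact_nonzero)
  next
    case (Suc b)
    have "int_polyfun_on non_roots_of_unity
        (\<lambda>q. qbinom (a + Suc b) a q + q ^ Suc a * qbinom (Suc a + b) (Suc a) q)"
      by (intro int_polyfun_on_add int_polyfun_on_mult int_polyfun_on_power IH_a Suc.IH)
    then show ?case
      by (rule int_polyfun_on_cong) (rule qbinom_pascal[symmetric])
  qed
qed

lemma int_polyfun_qbinom: "r \<le> n \<Longrightarrow> int_polyfun_on non_roots_of_unity (qbinom n r)"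
  using int_polyfun_qbinom_add[of r "n - r"] by simp

lemma int_polyfun_qfact_div_prod:
  "finite A \<Longrightarrow> sum f A \<le> k \<Longrightarrow>
    int_polyfun_on non_roots_of_unity (\<lambda>q. qfact k q / (\<Prod>i\<in>A. qfact (f i) q))"
proof (induction A arbitrary: k rule: finite_induct)
  case empty
  show ?case by (simp add: int_polyfun_qfact)
next
  case (insert x A)
  then have "int_polyfun_on non_roots_of_unity (\<lambda>q.
      qbinom (f x + (k - f x)) (f x) q * (qfact (k - f x) q / (\<Prod>i\<in>A. qfact (f i) q)))"
    by (intro int_polyfun_on_mult int_polyfun_qbinom_add insert.IH) simp
  then show ?case
    by (rule int_polyfun_on_cong) (use insert in \<open>simp add: qbinom_def qfact_nonzero\<close>)
qed

lemma int_polyfun_qmultinom: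
  "size lam \<le> k \<Longrightarrow> int_polyfun_on non_roots_of_unity (qmultinom k lam)"
  unfolding qmultinom_def[abs_def]
  by (rule int_polyfun_qfact_div_prod) (auto simp: size_multiset_overloaded_eq)

lemma size_le_sum_mset: "\<forall>x\<in>#M. 0 < x \<Longrightarrow> size M \<le> sum_mset (M :: nat multiset)"
  by (induction M) auto

lemma sum_mset_eq_sum_count: "sum_mset (M :: nat multiset) = (\<Sum>i\<in>set_mset M. count M i * i)"
proof (induction M)
  case (add x M)
  let ?S = "insert x (set_mset M)"
  have "(\<Sum>i\<in>set_mset (add_mset x M). count (add_mset x M) i * i)
      = (\<Sum>i\<in>?S. count M i * i + (if i = x then x else 0))"
    by (rule sum.cong) auto
  also have "\<dots> = (\<Sum>i\<in>?S. count M i * i) + x"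
    by (simp add: sum.distrib)
  also have "(\<Sum>i\<in>?S. count M i * i) = (\<Sum>i\<in>set_mset M. count M i * i)"
    by (rule sum.mono_neutral_right) (auto simp: not_in_iff)
  finally show ?case using add.IH by simp
qed simp

lemma sum_mset_mem_if_counts_mem:
  fixes M :: "nat multiset"
  assumes "0 \<in> A" "\<And>a b. a \<in> A \<Longrightarrow> b \<in> A \<Longrightarrow> a + b \<in> A" "\<And>a b. a \<in> A \<Longrightarrow> a * b \<in> A"
    and "\<And>i. i \<in># M \<Longrightarrow> count M i \<in> A"
  shows "sum_mset M \<in> A"
proof -
  have "(\<Sum>i\<in>B. count M i * i) \<in> A" if "B \<subseteq> set_mset M" for B
  proof -
    have "finite B" using that finite_subset by blast
    then show ?thesis using that by (induction B rule: finite_induct) (auto simp: assms)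
  qed
  then show ?thesis by (simp add: sum_mset_eq_sum_count)
qed

lemma prod_qfact_count_superset:
  "finite A \<Longrightarrow> set_mset M \<subseteq> A \<Longrightarrow>
    (\<Prod>i\<in>set_mset M. qfact (count M i) q) = (\<Prod>i\<in>A. qfact (count M i) q)"
  by (rule prod.mono_neutral_left) (auto simp: not_in_iff)

lemma qint_count_div_qint_qmultinom:
  assumes q: "q \<in> non_roots_of_unity" and i: "i \<in># lam" and size: "size lam = c"
  shows "qint (count lam i) q / qint c q * qmultinom c lam q = qmultinom (c - 1) (lam - {#i#}) q"
proof -
  let ?A = "set_mset lam - {i}"
  define P where "P = (\<Prod>j\<in>?A. qfact (count lam j) q)"
  obtain c' where c: "c = Suc c'" using i size by (cases c) auto
  obtain k where k: "count lam i = Suc k" using i by (metis count_eq_zero_iff not0_implies_Suc)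
  have "(\<Prod>j\<in>set_mset lam. qfact (count lam j) q) = qfact (Suc k) q * P"
    using i k by (simp add: P_def prod.remove)
  moreover have "(\<Prod>j\<in>set_mset (lam - {#i#}). qfact (count (lam - {#i#}) j) q) = qfact k q * P"
  proof -
    have "(\<Prod>j\<in>set_mset (lam - {#i#}). qfact (count (lam - {#i#}) j) q)
        = (\<Prod>j\<in>set_mset lam. qfact (count (lam - {#i#}) j) q)"
      by (rule prod_qfact_count_superset) (auto dest: in_diffD)
    also have "\<dots> = qfact k q * P"
      using i k unfolding P_def by (simp add: prod.remove)
    finally show ?thesis .
  qed
  moreover have "P \<noteq> 0" "qfact k q \<noteq> 0" "qfact c' q \<noteq> 0"
    "qint (Suc k) q \<noteq> 0" "qint (Suc c') q \<noteq> 0"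
    using q by (simp_all add: P_def qfact_nonzero qint_nonzero)
  ultimately show ?thesis
    by (simp add: qmultinom_def c k qfact_Suc field_simps)
qed

lemma int_polyfun_qint_sum_mset_div_qint_qmultinom:
  assumes "size lam = c"
  shows "int_polyfun_on non_roots_of_unity
    (\<lambda>q. qint (sum_mset lam) q / qint c q * qmultinom c lam q)"
proof -
  define F where "F a q = qint a q / qint c q * qmultinom c lam q" for a q
  have "sum_mset lam \<in> {a. int_polyfun_on non_roots_of_unity (F a)}"
  proof (rule sum_mset_mem_if_counts_mem; unfold mem_Collect_eq)
    show "int_polyfun_on non_roots_of_unity (F 0)"
      by (rule int_polyfun_on_cong[OF int_polyfun_on_0]) (simp add: F_def)
    show "int_polyfun_on non_roots_of_unity (F (a + b))"
      if "int_polyfun_on non_roots_of_unity (F a)" "int_polyfun_on non_roots_of_unity (F b)" for a b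
      using int_polyfun_on_add[OF that(1) int_polyfun_on_mult[OF int_polyfun_on_power[of _ a] that(2)]]
      by (rule int_polyfun_on_cong) (simp add: F_def qint_add add_divide_distrib distrib_right)
    show "int_polyfun_on non_roots_of_unity (F (a * b))"
      if "int_polyfun_on non_roots_of_unity (F a)" for a b
      using int_polyfun_on_mult[OF that int_polyfun_qint_power[of b a]]
      by (rule int_polyfun_on_cong) (simp add: F_def qint_mult)
    show "int_polyfun_on non_roots_of_unity (F (count lam i))" if i: "i \<in># lam" for i
    proof (rule int_polyfun_on_cong[OF int_polyfun_qmultinom])
      show "size (lam - {#i#}) \<le> c - 1"
        using assms i by (simp add: size_Diff_singleton)
      show "qmultinom (c - 1) (lam - {#i#}) q = F (count lam i) q"
        if "q \<in> non_roots_of_unity" for q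
        using qint_count_div_qint_qmultinom[OF that i assms] by (simp add: F_def)
    qed
  qed
  then show ?thesis by (simp add: F_def[abs_def])
qed

theorem proposition2p8:
  fixes n m c r s R S :: nat and alpha beta lam mu :: "nat multiset"
  assumes "0 < n" "0 < m" "0 < c" "R \<le> n" "S \<le> m"
    and "alpha \<in> Par R r" "beta \<in> Par S s" "lam \<in> Par (n - R) c" "mu \<in> Par (m - S) c"
  shows "\<exists>p :: int poly. \<forall>q :: complex. (\<forall>k>0. q ^ k \<noteq> 1) \<longrightarrow>
           qint ((n - R) * (m - S)) q / qint c q * qbinom n r q * qbinom m s q
           * qmultinom r alpha q * qmultinom s beta q * qmultinom c lam q * qmultinom c mu q
           = poly (map_poly of_int p) q"
proof -
  have sizes: "size alpha = r" "size beta = s" "size lam = c" "size mu = c"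
    and "sum_mset alpha = R" "sum_mset beta = S" "sum_mset lam = n - R"
    and "\<forall>x\<in>#alpha. 0 < x" "\<forall>x\<in>#beta. 0 < x"
    using assms(6-9) by (auto simp: Par_def)
  then have "r \<le> n" "s \<le> m"
    using assms(4,5) size_le_sum_mset[of alpha] size_le_sum_mset[of beta] by auto
  moreover have quotient: "int_polyfun_on non_roots_of_unity
      (\<lambda>q. qint (n - R) q / qint c q * qmultinom c lam q)"
    using int_polyfun_qint_sum_mset_div_qint_qmultinom[OF \<open>size lam = c\<close>]
      \<open>sum_mset lam = n - R\<close> by simp
  ultimately have "int_polyfun_on non_roots_of_unity (\<lambda>q.
      qint (n - R) q / qint c q * qmultinom c lam q * qint (m - S) (q ^ (n - R))
      * qbinom n r q * qbinom m s q * qmultinom r alpha q * qmultinom s beta q * qmultinom c mu q)"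
    by (intro quotient int_polyfun_on_mult int_polyfun_qint_power int_polyfun_qbinom
        int_polyfun_qmultinom) (simp_all add: sizes)
  then have "int_polyfun_on non_roots_of_unity (\<lambda>q.
      qint ((n - R) * (m - S)) q / qint c q * qbinom n r q * qbinom m s q
      * qmultinom r alpha q * qmultinom s beta q * qmultinom c lam q * qmultinom c mu q)"
    by (rule int_polyfun_on_cong) (simp add: qint_mult)
  then show ?thesis
    by (simp add: int_polyfun_on_def non_roots_of_unity_def)
qed

end
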